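(* The complement $\mathbb{R}^3\setminus(\mathcal{C}\cup Son\cup Son')$ has exactly twelve connected components (six in the half-space $Y>0$ and six in the half-space $Y<0$, the two collections being exchanged by the reflection $(z,\tau,Y)\mapsto(z,\tau,-Y)$).
   Context: Fix $b_1>1$ and $c>0$. In $\mathbb{R}^3$ with coordinates $(z,\tau,Y)$, let $\mathcal{C}=\{Y=0\}$, let the sonic surface $Son$ be the zero set of $c\,z[(b_1+1)z^2+3]\tau+[(b_1+1)z^2-1]\frac{Y}{2}+\frac{c[(b_1-1)z^2+1]}{z^2+1}$, and let the sonic$'$ surface $Son'$ be the zero set of $c\,z[(b_1+1)z^2+3]\tau-[(b_1+1)z^2-1]\frac{Y}{2}+\frac{c[(b_1-1)z^2+1]}{z^2+1}$. *)

theory Defs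
  imports "HOL-Analysis.Analysis"
begin

definition son_fun :: "real \<Rightarrow> real \<Rightarrow> real \<times> real \<times> real \<Rightarrow> real" where
  "son_fun b1 c p = (case p of (z, \<tau>, Y) \<Rightarrow>
     c * z * ((b1 + 1) * z^2 + 3) * \<tau> + ((b1 + 1) * z^2 - 1) * (Y / 2)
     + c * ((b1 - 1) * z^2 + 1) / (z^2 + 1))"

definition son'_fun :: "real \<Rightarrow> real \<Rightarrow> real \<times> real \<times> real \<Rightarrow> real" where
  "son'_fun b1 c p = (case p of (z, \<tau>, Y) \<Rightarrow>
     c * z * ((b1 + 1) * z^2 + 3) * \<tau> - ((b1 + 1) * z^2 - 1) * (Y / 2)
     + c * ((b1 - 1) * z^2 + 1) / (z^2 + 1))"

definition C_plane :: "(real \<times> real \<times> real) set" where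
  "C_plane = {p. snd (snd p) = 0}"

definition Son :: "real \<Rightarrow> real \<Rightarrow> (real \<times> real \<times> real) set" where
  "Son b1 c = {p. son_fun b1 c p = 0}"

definition Son' :: "real \<Rightarrow> real \<Rightarrow> (real \<times> real \<times> real) set" where
  "Son' b1 c = {p. son'_fun b1 c p = 0}"

definition reflY :: "real \<times> real \<times> real \<Rightarrow> real \<times> real \<times> real" where
  "reflY p = (case p of (z, \<tau>, Y) \<Rightarrow> (z, \<tau>, - Y))"

end

theory Submission
  imports Defs
begin

text \<open>
  Write \<open>son = u + a Y/2\<close> and \<open>son' = u - a Y/2\<close> with \<open>u = P(z) \<tau> + Q(z)\<close> and
  \<open>a = (b1 + 1) z\<^sup>2 - 1\<close> (\<open>tau_coeff\<close>, \<open>free_term\<close> and \<open>Y_coeff\<close> below). On the half-space \<open>Y > 0\<close> both are positive iff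
  \<open>|a| Y/2 < u\<close>, both negative iff \<open>|a| Y/2 < -u\<close>, and they have opposite signs iff
  \<open>2|u| < \<plusminus>a Y\<close>, which fixes the sign of \<open>a\<close>, i.e. the position of \<open>|z|\<close> relative to the
  root of \<open>a\<close>. Both negative forces \<open>z \<noteq> 0\<close>, since \<open>u = c > 0\<close> at \<open>z = 0\<close>. Splitting by
  the sign of \<open>z\<close> where needed gives six pieces. Solving the defining inequality for \<open>\<tau>\<close>
  (where \<open>P \<noteq> 0\<close>) or for \<open>Y\<close> (where \<open>a \<noteq> 0\<close>) exhibits each piece over a \<open>z\<close>-interval as a
  continuous image of a convex set. The exception is the piece \<open>|a| Y/2 < u\<close>, which crosses
  the plane \<open>z = 0\<close> where \<open>P\<close> vanishes; it is open and both of its halves accumulate on its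
  slice at \<open>z = 0\<close>, so it is connected as well. The reflection \<open>Y \<mapsto> -Y\<close> swaps \<open>son\<close> and
  \<open>son'\<close> and carries these six pieces onto the six pieces in \<open>Y < 0\<close>.
\<close>

lemma connected_open_across_hyperplane:
  fixes U :: "(real \<times> 'a::real_normed_vector) set"
  assumes "open U"
    and "connected (U \<inter> {p. 0 < fst p})" "connected (U \<inter> {p. fst p < 0})"
    and "U \<inter> {p. fst p = 0} \<noteq> {}"
  shows "connected U"
proof -
  let ?U0 = "U \<inter> {p. fst p = 0}"
  have U0_closure: "?U0 \<subseteq> closure (U \<inter> {p. 0 < s * fst p})" if "\<bar>s\<bar> = 1" for s :: real
  proof
    fix x assume x: "x \<in> ?U0"
    obtain r where r: "0 < r" "ball x r \<subseteq> U"
      using assms(1) x open_contains_ball by blast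
    show "x \<in> closure (U \<inter> {p. 0 < s * fst p})"
      unfolding closure_approachable
    proof (intro allI impI)
      fix e :: real assume "0 < e"
      define d where "d = min e r / 2"
      have d: "0 < d" "d < e" "d < r"
        using \<open>0 < e\<close> r(1) by (auto simp: d_def)
      obtain x1 x2 where x12: "x = (x1, x2)" by fastforce
      define y where "y = (x1 + s * d, x2)"
      have "dist y x = d"
        using that d(1) by (simp add: x12 y_def dist_Pair_Pair dist_real_def abs_mult)
      have "s * s = 1"
        using that by (metis abs_mult_self_eq mult_1)
      then have "0 < s * fst y"
        using x d(1) by (simp add: x12 y_def algebra_simps)
      moreover have "y \<in> U"
        using r(2) \<open>dist y x = d\<close> d(3) by (auto simp: dist_commute)
      ultimately show "\<exists>y\<in>U \<inter> {p. 0 < s * fst p}. dist y x < e"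
        using \<open>dist y x = d\<close> d(2) by auto
    qed
  qed
  have right: "connected (U \<inter> {p. 0 < fst p} \<union> ?U0)"
    using U0_closure[of 1]
    by (intro connected_intermediate_closure[OF assms(2)]) (auto intro: closure_subset[THEN subsetD])
  have left: "connected (U \<inter> {p. fst p < 0} \<union> ?U0)"
    using U0_closure[of "-1"]
    by (intro connected_intermediate_closure[OF assms(3)]) (auto intro: closure_subset[THEN subsetD])
  have "U = (U \<inter> {p. 0 < fst p} \<union> ?U0) \<union> (U \<inter> {p. fst p < 0} \<union> ?U0)"
    by auto
  then show ?thesis
    using connected_Un[OF right left] assms(4) by auto
qed

lemma connected_above_linear:
  fixes P Q h :: "real \<Rightarrow> real"
  assumes "convex Z" "continuous_on Z P" "continuous_on Z Q" "continuous_on Z h"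
    and "\<And>z. z \<in> Z \<Longrightarrow> P z \<noteq> 0"
  shows "connected {(z, \<tau>, Y). z \<in> Z \<and> 0 < Y \<and> h z * Y < P z * \<tau> + Q z}" (is "connected ?X")
    and "Z \<noteq> {} \<Longrightarrow> {(z, \<tau>, Y). z \<in> Z \<and> 0 < Y \<and> h z * Y < P z * \<tau> + Q z} \<noteq> {}"
proof -
  let ?D = "Z \<times> {0::real<..} \<times> {0::real<..}"
  define g where "g x = (fst x, (h (fst x) * fst (snd x) + snd (snd x) - Q (fst x)) / P (fst x), fst (snd x))"
    for x :: "real \<times> real \<times> real"
  have eq: "?X = g ` ?D"
  proof (intro set_eqI iffI)
    fix p assume "p \<in> ?X"
    then obtain z \<tau> Y where p: "p = (z, \<tau>, Y)" "z \<in> Z" "0 < Y" "h z * Y < P z * \<tau> + Q z"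
      by auto
    then have "g (z, Y, P z * \<tau> + Q z - h z * Y) = p"
      using assms(5) by (simp add: g_def)
    moreover have "(z, Y, P z * \<tau> + Q z - h z * Y) \<in> ?D"
      using p by simp
    ultimately show "p \<in> g ` ?D"
      by (metis image_eqI)
  next
    fix p assume "p \<in> g ` ?D"
    then obtain z Y w where "z \<in> Z" "0 < Y" "0 < w" "p = g (z, Y, w)"
      by auto
    then show "p \<in> ?X"
      using assms(5) by (simp add: g_def)
  qed
  have "continuous_on ?D g"
    unfolding g_def using assms(5)
    by (intro continuous_intros continuous_on_compose2[OF assms(2)] continuous_on_compose2[OF assms(3)]
        continuous_on_compose2[OF assms(4)]) auto
  then show "connected ?X"
    unfolding eq using assms(1) by (intro connected_continuous_image convex_connected convex_Times) auto
  show "Z \<noteq> {} \<Longrightarrow> ?X \<noteq> {}"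
    unfolding eq by auto
qed

lemma connected_strict_epigraph:
  fixes f :: "real \<Rightarrow> real \<Rightarrow> real"
  assumes "convex Z" "continuous_on (Z \<times> UNIV) (\<lambda>x. f (fst x) (snd x))"
  shows "connected {(z, \<tau>, Y). z \<in> Z \<and> f z \<tau> < Y}" (is "connected ?X")
    and "Z \<noteq> {} \<Longrightarrow> {(z, \<tau>, Y). z \<in> Z \<and> f z \<tau> < Y} \<noteq> {}"
proof -
  let ?D = "Z \<times> UNIV \<times> {0::real<..}"
  define g where "g x = (fst x, fst (snd x), f (fst x) (fst (snd x)) + snd (snd x))"
    for x :: "real \<times> real \<times> real"
  have eq: "?X = g ` ?D"
  proof (intro set_eqI iffI)
    fix p assume "p \<in> ?X"
    then obtain z \<tau> Y where p: "p = (z, \<tau>, Y)" "z \<in> Z" "f z \<tau> < Y"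
      by auto
    then have "p = g (z, \<tau>, Y - f z \<tau>)" and "(z, \<tau>, Y - f z \<tau>) \<in> ?D"
      by (simp_all add: g_def)
    then show "p \<in> g ` ?D"
      by blast
  qed (auto simp: g_def)
  have "continuous_on ?D g"
    unfolding g_def
    by (intro continuous_intros continuous_on_compose2[OF assms(2), of _ "\<lambda>x. (fst x, fst (snd x))", simplified]) auto
  then show "connected ?X"
    unfolding eq using assms(1) by (intro connected_continuous_image convex_connected convex_Times) auto
  show "Z \<noteq> {} \<Longrightarrow> ?X \<noteq> {}"
    unfolding eq by auto
qed

lemma pos_pos_iff_abs_less:
  fixes u a Y :: real
  shows "(0 < Y \<and> 0 < u + a * Y / 2 \<and> 0 < u - a * Y / 2) \<longleftrightarrow> (0 < Y \<and> \<bar>a\<bar> / 2 * Y < u)"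
proof -
  have "0 < Y \<Longrightarrow> \<bar>a\<bar> / 2 * Y < u \<longleftrightarrow> \<bar>a * Y\<bar> < 2 * u"
    by (simp add: abs_mult) linarith
  then show ?thesis
    by (auto simp: abs_less_iff)
qed

lemma neg_neg_iff_abs_less:
  fixes u a Y :: real
  shows "(0 < Y \<and> u + a * Y / 2 < 0 \<and> u - a * Y / 2 < 0) \<longleftrightarrow> (0 < Y \<and> \<bar>a\<bar> / 2 * Y < - u)"
  using pos_pos_iff_abs_less[of Y "- u" a] by auto

lemma pos_neg_iff_quotient_less:
  fixes u a Y :: real
  shows "(0 < Y \<and> 0 < u + a * Y / 2 \<and> u - a * Y / 2 < 0) \<longleftrightarrow> (0 < a \<and> 2 * \<bar>u\<bar> / \<bar>a\<bar> < Y)"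
proof
  assume asm: "0 < Y \<and> 0 < u + a * Y / 2 \<and> u - a * Y / 2 < 0"
  then have aY: "2 * \<bar>u\<bar> < a * Y"
    by auto
  then have "0 < a * Y"
    using abs_ge_zero[of u] by linarith
  then have "0 < a"
    using asm by (simp add: zero_less_mult_iff)
  with aY show "0 < a \<and> 2 * \<bar>u\<bar> / \<bar>a\<bar> < Y"
    by (simp add: pos_divide_less_eq mult.commute)
next
  assume "0 < a \<and> 2 * \<bar>u\<bar> / \<bar>a\<bar> < Y"
  then have a: "0 < a" and "2 * \<bar>u\<bar> / a < Y"
    by auto
  then have aY: "2 * \<bar>u\<bar> < a * Y"
    by (simp add: pos_divide_less_eq mult.commute)
  then have "0 < a * Y"
    using abs_ge_zero[of u] by linarith
  with a have "0 < Y"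
    by (simp add: zero_less_mult_iff)
  with aY show "0 < Y \<and> 0 < u + a * Y / 2 \<and> u - a * Y / 2 < 0"
    by auto
qed

lemma neg_pos_iff_quotient_less:
  fixes u a Y :: real
  shows "(0 < Y \<and> u + a * Y / 2 < 0 \<and> 0 < u - a * Y / 2) \<longleftrightarrow> (a < 0 \<and> 2 * \<bar>u\<bar> / \<bar>a\<bar> < Y)"
  using pos_neg_iff_quotient_less[of Y u "- a"] by auto

definition tau_coeff :: "real \<Rightarrow> real \<Rightarrow> real \<Rightarrow> real" where
  "tau_coeff b1 c z = c * z * ((b1 + 1) * z^2 + 3)"

definition free_term :: "real \<Rightarrow> real \<Rightarrow> real \<Rightarrow> real" where
  "free_term b1 c z = c * ((b1 - 1) * z^2 + 1) / (z^2 + 1)"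

definition Y_coeff :: "real \<Rightarrow> real \<Rightarrow> real" where
  "Y_coeff b1 z = (b1 + 1) * z^2 - 1"

lemma son_fun_eq:
  "son_fun b1 c p = tau_coeff b1 c (fst p) * fst (snd p) + free_term b1 c (fst p)
     + Y_coeff b1 (fst p) * snd (snd p) / 2"
  by (cases p) (simp add: son_fun_def tau_coeff_def free_term_def Y_coeff_def)

lemma son'_fun_eq:
  "son'_fun b1 c p = tau_coeff b1 c (fst p) * fst (snd p) + free_term b1 c (fst p)
     - Y_coeff b1 (fst p) * snd (snd p) / 2"
  by (cases p) (simp add: son'_fun_def tau_coeff_def free_term_def Y_coeff_def)

lemma continuous_on_son_coefficients:
  "continuous_on A (tau_coeff b1 c)" "continuous_on A (free_term b1 c)" "continuous_on A (Y_coeff b1)"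
  by (simp_all only: tau_coeff_def [abs_def] free_term_def [abs_def] Y_coeff_def [abs_def])
    (intro continuous_intros; smt (verit) zero_le_power2)+

lemma continuous_on_son_fun:
  "continuous_on A (son_fun b1 c)" "continuous_on A (son'_fun b1 c)"
  by (simp_all only: son_fun_eq [abs_def] son'_fun_eq [abs_def])
    (intro continuous_intros continuous_on_son_coefficients[of UNIV, THEN continuous_on_compose2]; simp)+

lemma reflY_eq: "reflY p = (fst p, fst (snd p), - snd (snd p))"
  by (cases p) (simp add: reflY_def)

lemma reflY_reflY [simp]: "reflY (reflY p) = p"
  by (simp add: reflY_eq)

lemma image_reflY_eq_vimage: "reflY ` A = reflY -` A"
  by (auto simp: image_iff) (metis reflY_reflY)

lemma continuous_on_reflY: "continuous_on A reflY"
  unfolding reflY_eq[abs_def] by (intro continuous_intros)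

lemma son_fun_reflY [simp]: "son_fun b1 c (reflY p) = son'_fun b1 c p"
  and son'_fun_reflY [simp]: "son'_fun b1 c (reflY p) = son_fun b1 c p"
  by (simp_all add: reflY_eq son_fun_eq son'_fun_eq)

lemma reflY_components [simp]:
  "fst (reflY p) = fst p" "fst (snd (reflY p)) = fst (snd p)" "snd (snd (reflY p)) = - snd (snd p)"
  by (simp_all add: reflY_eq)

lemma son_coefficients_at_0 [simp]:
  "tau_coeff b1 c 0 = 0" "free_term b1 c 0 = c" "Y_coeff b1 0 = -1"
  by (simp_all add: tau_coeff_def free_term_def Y_coeff_def)

definition Y_coeff_root :: "real \<Rightarrow> real" where
  "Y_coeff_root b1 = sqrt (1 / (b1 + 1))"

definition sonic_complement :: "real \<Rightarrow> real \<Rightarrow> (real \<times> real \<times> real) set" where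
  "sonic_complement b1 c = UNIV - (C_plane \<union> Son b1 c \<union> Son' b1 c)"

lemma mem_sonic_complement:
  "p \<in> sonic_complement b1 c \<longleftrightarrow> snd (snd p) \<noteq> 0 \<and> son_fun b1 c p \<noteq> 0 \<and> son'_fun b1 c p \<noteq> 0"
  by (auto simp: sonic_complement_def C_plane_def Son_def Son'_def)

lemma reflY_mem_sonic_complement [simp]:
  "reflY p \<in> sonic_complement b1 c \<longleftrightarrow> p \<in> sonic_complement b1 c"
  by (auto simp: mem_sonic_complement)

text \<open>A constructor records the signs of \<open>son\<close> and \<open>son'\<close> and, where the pattern alone
  does not give a connected set, the side of the plane \<open>z = 0\<close>.\<close>

datatype sign_pattern =
  Pos_Pos | Neg_Neg_Right | Neg_Neg_Left | Pos_Neg_Right | Pos_Neg_Left | Neg_Pos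

fun has_sign_pattern :: "sign_pattern \<Rightarrow> real \<Rightarrow> real \<Rightarrow> real \<Rightarrow> bool" where
  "has_sign_pattern Pos_Pos s s' z \<longleftrightarrow> 0 < s \<and> 0 < s'"
| "has_sign_pattern Neg_Neg_Right s s' z \<longleftrightarrow> s < 0 \<and> s' < 0 \<and> 0 < z"
| "has_sign_pattern Neg_Neg_Left s s' z \<longleftrightarrow> s < 0 \<and> s' < 0 \<and> z < 0"
| "has_sign_pattern Pos_Neg_Right s s' z \<longleftrightarrow> 0 < s \<and> s' < 0 \<and> 0 < z"
| "has_sign_pattern Pos_Neg_Left s s' z \<longleftrightarrow> 0 < s \<and> s' < 0 \<and> z < 0"
| "has_sign_pattern Neg_Pos s s' z \<longleftrightarrow> s < 0 \<and> 0 < s'"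

lemma UNIV_sign_pattern:
  "(UNIV :: sign_pattern set) = {Pos_Pos, Neg_Neg_Right, Neg_Neg_Left, Pos_Neg_Right, Pos_Neg_Left, Neg_Pos}"
  using sign_pattern.exhaust by auto

lemma card_sign_pattern: "card (UNIV :: sign_pattern set) = 6"
  by (simp add: UNIV_sign_pattern)

instance sign_pattern :: finite
  by standard (simp add: UNIV_sign_pattern)

lemma has_sign_pattern_unique:
  "has_sign_pattern k s s' z \<Longrightarrow> has_sign_pattern l s s' z \<Longrightarrow> k = l"
  by (cases k; cases l) auto

lemma ex_has_sign_pattern:
  assumes "s \<noteq> 0" "s' \<noteq> 0" "s' < 0 \<Longrightarrow> z \<noteq> 0"
  shows "\<exists>k. has_sign_pattern k s s' z"
  using assms by (meson has_sign_pattern.simps linorder_neqE_linordered_idom)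

definition upper_chamber :: "real \<Rightarrow> real \<Rightarrow> sign_pattern \<Rightarrow> (real \<times> real \<times> real) set" where
  "upper_chamber b1 c k =
     {p. 0 < snd (snd p) \<and> has_sign_pattern k (son_fun b1 c p) (son'_fun b1 c p) (fst p)}"

fun chamber :: "real \<Rightarrow> real \<Rightarrow> bool \<times> sign_pattern \<Rightarrow> (real \<times> real \<times> real) set" where
  "chamber b1 c (True, k) = upper_chamber b1 c k"
| "chamber b1 c (False, k) = reflY ` upper_chamber b1 c k"

lemma open_upper_chamber: "open (upper_chamber b1 c k)"
  by (cases k; simp only: upper_chamber_def has_sign_pattern.simps;
      intro open_Collect_conj open_Collect_less continuous_intros continuous_on_son_fun)

lemma mem_upper_chamber:
  "(z, \<tau>, Y) \<in> upper_chamber b1 c k \<longleftrightarrow> 0 < Y \<and>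
     has_sign_pattern k
       (tau_coeff b1 c z * \<tau> + free_term b1 c z + Y_coeff b1 z * Y / 2)
       (tau_coeff b1 c z * \<tau> + free_term b1 c z - Y_coeff b1 z * Y / 2) z"
  by (simp add: upper_chamber_def son_fun_eq son'_fun_eq)

lemma upper_chamber_Pos_Pos:
  "upper_chamber b1 c Pos_Pos \<inter> {p. fst p \<in> Z} =
     {(z, \<tau>, Y). z \<in> Z \<and> 0 < Y \<and> \<bar>Y_coeff b1 z\<bar> / 2 * Y < tau_coeff b1 c z * \<tau> + free_term b1 c z}"
proof -
  have "(z, \<tau>, Y) \<in> upper_chamber b1 c Pos_Pos \<longleftrightarrow>
      0 < Y \<and> \<bar>Y_coeff b1 z\<bar> / 2 * Y < tau_coeff b1 c z * \<tau> + free_term b1 c z" for z \<tau> Y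
    unfolding mem_upper_chamber has_sign_pattern.simps by (rule pos_pos_iff_abs_less)
  then show ?thesis
    by auto
qed

lemma upper_chamber_Neg_Neg:
  "upper_chamber b1 c Neg_Neg_Right =
     {(z, \<tau>, Y). z \<in> {0<..} \<and> 0 < Y \<and> \<bar>Y_coeff b1 z\<bar> / 2 * Y < - (tau_coeff b1 c z * \<tau> + free_term b1 c z)}"
    (is ?right)
  "upper_chamber b1 c Neg_Neg_Left =
     {(z, \<tau>, Y). z \<in> {..<0} \<and> 0 < Y \<and> \<bar>Y_coeff b1 z\<bar> / 2 * Y < - (tau_coeff b1 c z * \<tau> + free_term b1 c z)}"
    (is ?left)
proof -
  have "(z, \<tau>, Y) \<in> upper_chamber b1 c Neg_Neg_Right \<longleftrightarrow>
      0 < z \<and> 0 < Y \<and> \<bar>Y_coeff b1 z\<bar> / 2 * Y < - (tau_coeff b1 c z * \<tau> + free_term b1 c z)"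
    "(z, \<tau>, Y) \<in> upper_chamber b1 c Neg_Neg_Left \<longleftrightarrow>
      z < 0 \<and> 0 < Y \<and> \<bar>Y_coeff b1 z\<bar> / 2 * Y < - (tau_coeff b1 c z * \<tau> + free_term b1 c z)"
    for z \<tau> Y
    unfolding mem_upper_chamber has_sign_pattern.simps
    using neg_neg_iff_abs_less[of Y "tau_coeff b1 c z * \<tau> + free_term b1 c z" "Y_coeff b1 z"] by auto
  then show ?right ?left
    by auto
qed

lemma connected_son_epigraph:
  assumes "convex Z" "\<And>z. z \<in> Z \<Longrightarrow> Y_coeff b1 z \<noteq> 0"
  shows "connected {(z, \<tau>, Y). z \<in> Z \<and> 2 * \<bar>tau_coeff b1 c z * \<tau> + free_term b1 c z\<bar> / \<bar>Y_coeff b1 z\<bar> < Y}"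
      (is "connected ?X")
    and "Z \<noteq> {} \<Longrightarrow>
      {(z, \<tau>, Y). z \<in> Z \<and> 2 * \<bar>tau_coeff b1 c z * \<tau> + free_term b1 c z\<bar> / \<bar>Y_coeff b1 z\<bar> < Y} \<noteq> {}"
proof -
  have "continuous_on (Z \<times> UNIV)
      (\<lambda>x. 2 * \<bar>tau_coeff b1 c (fst x) * snd x + free_term b1 c (fst x)\<bar> / \<bar>Y_coeff b1 (fst x)\<bar>)"
    using assms(2)
    by (intro continuous_intros continuous_on_son_coefficients[of UNIV, THEN continuous_on_compose2]) auto
  from connected_strict_epigraph[OF assms(1) this]
  show "connected ?X" and "Z \<noteq> {} \<Longrightarrow> ?X \<noteq> {}"
    by simp_all
qed

lemma mem_chamber:
  "p \<in> chamber b1 c (up, k) \<longleftrightarrow> (if up then p else reflY p) \<in> upper_chamber b1 c k"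
  by (cases up) (simp_all add: image_reflY_eq_vimage)

lemma disjoint_family_chamber: "disjoint_family (chamber b1 c)"
  by (auto simp: disjoint_family_on_def split_paired_All mem_chamber upper_chamber_def
      dest: has_sign_pattern_unique split: if_splits)

lemma chamber_half_space:
  "chamber b1 c (True, k) \<subseteq> {p. 0 < snd (snd p)}"
  "chamber b1 c (False, k) \<subseteq> {p. snd (snd p) < 0}"
  by (auto simp: upper_chamber_def)

context
  fixes b1 c :: real
  assumes b1: "-1 < b1" and c: "0 < c"
begin

lemma tau_coeff_eq_0_iff: "tau_coeff b1 c z = 0 \<longleftrightarrow> z = 0"
proof -
  have "0 < (b1 + 1) * z^2 + 3"
    using b1 by (intro add_nonneg_pos) auto
  then show ?thesis
    using c by (simp add: tau_coeff_def)
qed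

lemma Y_coeff_root_pos: "0 < Y_coeff_root b1"
  using b1 by (simp add: Y_coeff_root_def)

lemma Y_coeff_pos_iff: "0 < Y_coeff b1 z \<longleftrightarrow> Y_coeff_root b1 < \<bar>z\<bar>"
proof -
  have "0 < Y_coeff b1 z \<longleftrightarrow> 1 / (b1 + 1) < z^2"
    using b1 by (simp add: Y_coeff_def field_simps)
  also have "\<dots> \<longleftrightarrow> sqrt (1 / (b1 + 1)) < sqrt (z^2)"
    by (simp only: real_sqrt_less_iff)
  finally show ?thesis
    by (simp add: Y_coeff_root_def)
qed

lemma Y_coeff_neg_iff: "Y_coeff b1 z < 0 \<longleftrightarrow> \<bar>z\<bar> < Y_coeff_root b1"
proof -
  have "Y_coeff b1 z < 0 \<longleftrightarrow> z^2 < 1 / (b1 + 1)"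
    using b1 by (simp add: Y_coeff_def field_simps)
  also have "\<dots> \<longleftrightarrow> sqrt (z^2) < sqrt (1 / (b1 + 1))"
    by (simp only: real_sqrt_less_iff)
  finally show ?thesis
    by (simp add: Y_coeff_root_def)
qed

lemma Y_coeff_eq_0_iff: "Y_coeff b1 z = 0 \<longleftrightarrow> \<bar>z\<bar> = Y_coeff_root b1"
  by (metis Y_coeff_neg_iff Y_coeff_pos_iff linorder_neqE_linordered_idom less_irrefl)

lemma upper_chamber_mixed:
  "upper_chamber b1 c Pos_Neg_Right =
     {(z, \<tau>, Y). z \<in> {Y_coeff_root b1<..} \<and> 2 * \<bar>tau_coeff b1 c z * \<tau> + free_term b1 c z\<bar> / \<bar>Y_coeff b1 z\<bar> < Y}"
    (is ?right)
  "upper_chamber b1 c Pos_Neg_Left =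
     {(z, \<tau>, Y). z \<in> {..< - Y_coeff_root b1} \<and> 2 * \<bar>tau_coeff b1 c z * \<tau> + free_term b1 c z\<bar> / \<bar>Y_coeff b1 z\<bar> < Y}"
    (is ?left)
  "upper_chamber b1 c Neg_Pos =
     {(z, \<tau>, Y). z \<in> {- Y_coeff_root b1<..<Y_coeff_root b1} \<and> 2 * \<bar>tau_coeff b1 c z * \<tau> + free_term b1 c z\<bar> / \<bar>Y_coeff b1 z\<bar> < Y}"
    (is ?middle)
proof -
  have "(z, \<tau>, Y) \<in> upper_chamber b1 c Pos_Neg_Right \<longleftrightarrow>
      Y_coeff_root b1 < z \<and> 2 * \<bar>tau_coeff b1 c z * \<tau> + free_term b1 c z\<bar> / \<bar>Y_coeff b1 z\<bar> < Y"
    "(z, \<tau>, Y) \<in> upper_chamber b1 c Pos_Neg_Left \<longleftrightarrow>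
      z < - Y_coeff_root b1 \<and> 2 * \<bar>tau_coeff b1 c z * \<tau> + free_term b1 c z\<bar> / \<bar>Y_coeff b1 z\<bar> < Y"
    "(z, \<tau>, Y) \<in> upper_chamber b1 c Neg_Pos \<longleftrightarrow>
      \<bar>z\<bar> < Y_coeff_root b1 \<and> 2 * \<bar>tau_coeff b1 c z * \<tau> + free_term b1 c z\<bar> / \<bar>Y_coeff b1 z\<bar> < Y"
    for z \<tau> Y
    unfolding mem_upper_chamber has_sign_pattern.simps
    using pos_neg_iff_quotient_less[of Y "tau_coeff b1 c z * \<tau> + free_term b1 c z" "Y_coeff b1 z"]
      neg_pos_iff_quotient_less[of Y "tau_coeff b1 c z * \<tau> + free_term b1 c z" "Y_coeff b1 z"]
      Y_coeff_pos_iff[of z] Y_coeff_neg_iff[of z] Y_coeff_root_pos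
    by auto
  then show ?right ?left ?middle
    by (auto simp: abs_less_iff)
qed

lemma connected_son_above:
  assumes "convex Z" "0 \<notin> Z"
  shows "connected {(z, \<tau>, Y). z \<in> Z \<and> 0 < Y \<and> \<bar>Y_coeff b1 z\<bar> / 2 * Y < tau_coeff b1 c z * \<tau> + free_term b1 c z}"
  using assms b1 c
  by (intro connected_above_linear continuous_intros continuous_on_son_coefficients)
    (auto simp: tau_coeff_eq_0_iff)

lemma connected_son_below:
  assumes "convex Z" "0 \<notin> Z"
  shows "connected {(z, \<tau>, Y). z \<in> Z \<and> 0 < Y \<and> \<bar>Y_coeff b1 z\<bar> / 2 * Y < - (tau_coeff b1 c z * \<tau> + free_term b1 c z)}"
      (is "connected ?X")
    and "Z \<noteq> {} \<Longrightarrow>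
      {(z, \<tau>, Y). z \<in> Z \<and> 0 < Y \<and> \<bar>Y_coeff b1 z\<bar> / 2 * Y < - (tau_coeff b1 c z * \<tau> + free_term b1 c z)} \<noteq> {}"
proof -
  have eq: "?X = {(z, \<tau>, Y). z \<in> Z \<and> 0 < Y \<and> \<bar>Y_coeff b1 z\<bar> / 2 * Y < - tau_coeff b1 c z * \<tau> + - free_term b1 c z}"
    by auto
  have cont: "continuous_on Z (\<lambda>z. - tau_coeff b1 c z)" "continuous_on Z (\<lambda>z. - free_term b1 c z)"
    "continuous_on Z (\<lambda>z. \<bar>Y_coeff b1 z\<bar> / 2)"
    by (intro continuous_intros continuous_on_son_coefficients; simp)+
  have "- tau_coeff b1 c z \<noteq> 0" if "z \<in> Z" for z
    using that assms(2) tau_coeff_eq_0_iff by auto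
  note below = connected_above_linear[OF assms(1) cont this]
  show "connected ?X"
    unfolding eq by (rule below(1))
  show "Z \<noteq> {} \<Longrightarrow> ?X \<noteq> {}"
    unfolding eq by (rule below(2))
qed

lemma axis_point_mem_upper_chamber: "(0, 0, c) \<in> upper_chamber b1 c Pos_Pos"
  using c by (simp add: upper_chamber_def son_fun_eq son'_fun_eq)

lemma connected_upper_chamber_Pos_Pos: "connected (upper_chamber b1 c Pos_Pos)"
proof (rule connected_open_across_hyperplane)
  show "open (upper_chamber b1 c Pos_Pos)"
    by (rule open_upper_chamber)
  show "connected (upper_chamber b1 c Pos_Pos \<inter> {p. 0 < fst p})"
    using upper_chamber_Pos_Pos[of b1 c "{0<..}"] connected_son_above[of "{0<..}"] by simp
  show "connected (upper_chamber b1 c Pos_Pos \<inter> {p. fst p < 0})"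
    using upper_chamber_Pos_Pos[of b1 c "{..<0}"] connected_son_above[of "{..<0}"] by simp
  show "upper_chamber b1 c Pos_Pos \<inter> {p. fst p = 0} \<noteq> {}"
    using axis_point_mem_upper_chamber by auto
qed

lemma connected_upper_chamber: "connected (upper_chamber b1 c k) \<and> upper_chamber b1 c k \<noteq> {}"
proof (cases k)
  case Pos_Pos
  then show ?thesis
    using connected_upper_chamber_Pos_Pos axis_point_mem_upper_chamber by auto
next
  case Neg_Neg_Right
  show ?thesis
    unfolding Neg_Neg_Right upper_chamber_Neg_Neg by (intro conjI connected_son_below) auto
next
  case Neg_Neg_Left
  show ?thesis
    unfolding Neg_Neg_Left upper_chamber_Neg_Neg by (intro conjI connected_son_below) auto
next
  case Pos_Neg_Right
  have "Y_coeff b1 z \<noteq> 0" if "z \<in> {Y_coeff_root b1<..}" for z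
    using that Y_coeff_root_pos by (simp add: Y_coeff_eq_0_iff)
  moreover have "{Y_coeff_root b1<..} \<noteq> {}"
    using gt_ex[of "Y_coeff_root b1"] by auto
  ultimately show ?thesis
    unfolding Pos_Neg_Right upper_chamber_mixed by (intro conjI connected_son_epigraph) auto
next
  case Pos_Neg_Left
  have "Y_coeff b1 z \<noteq> 0" if "z \<in> {..< - Y_coeff_root b1}" for z
    using that Y_coeff_root_pos by (simp add: Y_coeff_eq_0_iff)
  moreover have "{..< - Y_coeff_root b1} \<noteq> {}"
    using lt_ex[of "- Y_coeff_root b1"] by auto
  ultimately show ?thesis
    unfolding Pos_Neg_Left upper_chamber_mixed by (intro conjI connected_son_epigraph) auto
next
  case Neg_Pos
  have "Y_coeff b1 z \<noteq> 0" if "z \<in> {- Y_coeff_root b1<..<Y_coeff_root b1}" for z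
    using that by (auto simp: Y_coeff_eq_0_iff)
  moreover have "{- Y_coeff_root b1<..<Y_coeff_root b1} \<noteq> {}"
    using Y_coeff_root_pos by simp
  ultimately show ?thesis
    unfolding Neg_Pos upper_chamber_mixed by (intro conjI connected_son_epigraph) auto
qed

lemma chamber_open_connected:
  "open (chamber b1 c i) \<and> connected (chamber b1 c i) \<and> chamber b1 c i \<noteq> {}"
proof -
  obtain up k where i: "i = (up, k)"
    by fastforce
  have "open (reflY ` upper_chamber b1 c k)"
    unfolding image_reflY_eq_vimage by (rule open_vimage[OF open_upper_chamber continuous_on_reflY])
  moreover have "connected (reflY ` upper_chamber b1 c k)"
    using connected_upper_chamber by (intro connected_continuous_image continuous_on_reflY) auto
  ultimately show ?thesis
    using i open_upper_chamber connected_upper_chamber by (cases up) auto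
qed

lemma sonic_complement_upper_half:
  "sonic_complement b1 c \<inter> {p. 0 < snd (snd p)} = (\<Union>k. upper_chamber b1 c k)"
proof (intro equalityI subsetI)
  fix p assume p: "p \<in> sonic_complement b1 c \<inter> {p. 0 < snd (snd p)}"
  then have "son'_fun b1 c p < 0 \<Longrightarrow> fst p \<noteq> 0"
    using c by (cases p) (auto simp: son'_fun_eq)
  then obtain k where "has_sign_pattern k (son_fun b1 c p) (son'_fun b1 c p) (fst p)"
    using p ex_has_sign_pattern[of "son_fun b1 c p" "son'_fun b1 c p" "fst p"]
    by (auto simp: mem_sonic_complement)
  then show "p \<in> (\<Union>k. upper_chamber b1 c k)"
    using p by (auto simp: upper_chamber_def)
next
  fix p assume "p \<in> (\<Union>k. upper_chamber b1 c k)"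
  then obtain k where "p \<in> upper_chamber b1 c k"
    by blast
  then show "p \<in> sonic_complement b1 c \<inter> {p. 0 < snd (snd p)}"
    by (cases k) (auto simp: upper_chamber_def mem_sonic_complement)
qed

lemma sonic_complement_eq_Union_chamber: "sonic_complement b1 c = (\<Union>i. chamber b1 c i)"
proof (intro equalityI subsetI)
  fix p assume "p \<in> sonic_complement b1 c"
  then have "(if 0 < snd (snd p) then p else reflY p) \<in> sonic_complement b1 c \<inter> {p. 0 < snd (snd p)}"
    by (auto simp: mem_sonic_complement)
  then obtain k where "(if 0 < snd (snd p) then p else reflY p) \<in> upper_chamber b1 c k"
    unfolding sonic_complement_upper_half by blast
  then have "p \<in> chamber b1 c (0 < snd (snd p), k)"
    by (simp add: mem_chamber)
  then show "p \<in> (\<Union>i. chamber b1 c i)"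
    by blast
next
  fix p assume "p \<in> (\<Union>i. chamber b1 c i)"
  then obtain up k where "p \<in> chamber b1 c (up, k)"
    by fastforce
  then have "(if up then p else reflY p) \<in> upper_chamber b1 c k"
    by (simp only: mem_chamber)
  then have "(if up then p else reflY p) \<in> sonic_complement b1 c"
    using sonic_complement_upper_half by (metis Int_iff UNIV_I UN_I)
  then show "p \<in> sonic_complement b1 c"
    by (cases up) simp_all
qed

lemma chamber_subset_half_space_iff:
  "chamber b1 c (up, k) \<subseteq> {p. 0 < snd (snd p)} \<longleftrightarrow> up" (is ?upper)
  "chamber b1 c (up, k) \<subseteq> {p. snd (snd p) < 0} \<longleftrightarrow> \<not> up" (is ?lower)
proof -
  obtain p where p: "p \<in> chamber b1 c (up, k)"
    using chamber_open_connected by blast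
  have "0 < snd (snd p) \<longleftrightarrow> up"
    using p chamber_half_space[of b1 c k] by (cases up) auto
  then show ?upper ?lower
    using p chamber_half_space[of b1 c k] by (cases up; auto)+
qed

lemma components_sonic_complement: "components (sonic_complement b1 c) = range (chamber b1 c)"
  using chamber_open_connected disjoint_family_on_disjoint_image[OF disjoint_family_chamber]
  by (intro components_open_unique) (auto simp: sonic_complement_eq_Union_chamber)

lemma components_sonic_complement_half_spaces:
  "{K \<in> components (sonic_complement b1 c). K \<subseteq> {p. 0 < snd (snd p)}} = chamber b1 c ` ({True} \<times> UNIV)"
    (is ?upper)
  "{K \<in> components (sonic_complement b1 c). K \<subseteq> {p. snd (snd p) < 0}} = chamber b1 c ` ({False} \<times> UNIV)"
    (is ?lower)
proof -
  have "chamber b1 c i \<subseteq> {p. 0 < snd (snd p)} \<longleftrightarrow> i \<in> {True} \<times> UNIV"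
    "chamber b1 c i \<subseteq> {p. snd (snd p) < 0} \<longleftrightarrow> i \<in> {False} \<times> UNIV" for i
    by (cases i; simp add: chamber_subset_half_space_iff)+
  then show ?upper ?lower
    unfolding components_sonic_complement by blast+
qed

lemma inj_chamber: "inj (chamber b1 c)"
proof -
  have "chamber b1 c i \<noteq> {}" if "i \<in> UNIV" for i
    using chamber_open_connected by blast
  then show ?thesis
    using disjoint_family_chamber[of b1 c] disjoint_family_on_iff_disjoint_image by blast
qed

end

theorem proposition2:
  fixes b1 c :: real
  assumes "b1 > 1" and "c > 0"
  defines "S \<equiv> UNIV - (C_plane \<union> Son b1 c \<union> Son' b1 c)"
  shows "finite (components S) \<and> card (components S) = 12
    \<and> card {K \<in> components S. K \<subseteq> {p. snd (snd p) > 0}} = 6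
    \<and> card {K \<in> components S. K \<subseteq> {p. snd (snd p) < 0}} = 6
    \<and> (\<lambda>K. reflY ` K) ` {K \<in> components S. K \<subseteq> {p. snd (snd p) > 0}}
        = {K \<in> components S. K \<subseteq> {p. snd (snd p) < 0}}"
proof -
  have b1: "-1 < b1" and c: "0 < c"
    using assms(1,2) by simp_all
  have S: "S = sonic_complement b1 c"
    by (simp add: S_def sonic_complement_def)
  have card: "card (chamber b1 c ` A) = card A" for A
    using inj_chamber[OF b1 c] by (simp add: card_image inj_on_subset)
  have half: "chamber b1 c ` ({up} \<times> UNIV) = range (\<lambda>k. chamber b1 c (up, k))" for up
    by auto
  have "(\<lambda>K. reflY ` K) ` chamber b1 c ` ({True} \<times> UNIV) = chamber b1 c ` ({False} \<times> UNIV)"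
    unfolding half by (simp add: image_image)
  then show ?thesis
    unfolding S components_sonic_complement_half_spaces[OF b1 c]
    unfolding components_sonic_complement[OF b1 c] card
    by (simp add: card_cartesian_product card_sign_pattern UNIV_Times_UNIV[symmetric] del: UNIV_Times_UNIV)
qed

end
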